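(* There exist absolute constants $C_1,C_2>0$ such that for every compact set $\Omega\subset\mathbb{R}^d$ and every $N$-dimensional linear subspace $X_N$ of the space of real-valued continuous functions on $\Omega$, there exists a set of $m\le C_1N$ points $\xi^1,\dots,\xi^m\in\Omega$ such that for every $f\in X_N$ $$ \|f\|_\infty\le C_2\sqrt{N}\max_{1\le j\le m}|f(\xi^j)|, $$ where $\|f\|_\infty=\max_{\mathbf x\in\Omega}|f(\mathbf x)|$. *)

theory Defs
  imports "HOL-Analysis.Analysis" "HOL-Library.Function_Algebras"
begin

text \<open>Points of R^d are encoded as functions x :: nat => real with x i = 0 for all i >= d;
  the type nat => real carries the product topology, which on this slice coincides
  with the Euclidean topology of R^d.\<close>

definition Rd :: "nat \<Rightarrow> (nat \<Rightarrow> real) set" where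
  "Rd d = {x. \<forall>i\<ge>d. x i = 0}"

definition fscale :: "real \<Rightarrow> ('a \<Rightarrow> real) \<Rightarrow> ('a \<Rightarrow> real)" where
  "fscale c f = (\<lambda>x. c * f x)"

text \<open>Elements of C(Omega) are represented as functions continuous on Omega and zero
  outside Omega (so that distinct representatives give distinct elements of C(Omega)).\<close>
definition Cfun :: "'a::topological_space set \<Rightarrow> ('a \<Rightarrow> real) set" where
  "Cfun \<Omega> = {f. continuous_on \<Omega> f \<and> (\<forall>x. x \<notin> \<Omega> \<longrightarrow> f x = 0)}"

definition dim_subspace_C :: "'a::topological_space set \<Rightarrow> ('a \<Rightarrow> real) set \<Rightarrow> nat \<Rightarrow> bool" where
  "dim_subspace_C \<Omega> X N \<longleftrightarrow> X \<subseteq> Cfun \<Omega> \<and> module.subspace fscale X \<and>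
     (\<exists>B. finite B \<and> card B = N \<and> \<not> module.dependent fscale B \<and>
          module.span fscale B = X)"

end

(*
  Let phi_1, ..., phi_N be a basis of X_N and, for points xi_1, ..., xi_m of Omega, let A be the
  collocation matrix A_ji = phi_i(xi_j), with Gram matrix G = A^T A. Take m = 2N points for which
  det G is within the factor 1 + 1/(2N) of its supremum. Replacing xi_k by x is a rank-two update
  of G, and Sylvester's determinant identity shows that det G changes by the factor
  (1 + q(x)) (1 - q(xi_k)) + b_k(x)^2, where q(v) = v^T G^-1 v is the leverage and
  b_k(x) = phi(xi_k)^T G^-1 phi(x). Since the leverages of the rows sum to N and the b_k(x)^2 sum
  to q(x), summing these factors over k gives (1 + q(x)) N + q(x) <= 2N + 1, i.e. q(x) <= 1.
  By Cauchy-Schwarz, f(x)^2 <= q(x) * sum_j f(xi_j)^2 <= 2N max_j f(xi_j)^2 for every f in X_N.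
*)
theory Submission
  imports Defs "Jordan_Normal_Form.Determinant"
begin

\<comment> \<open>HOL-Analysis (imported by Defs) and Jordan_Normal_Form both claim \<open>\<bullet>\<close> and \<open>$\<close>.\<close>
unbundle no inner_syntax and no vec_syntax

section \<open>Determinant identities\<close>

text \<open>Sylvester's determinant identity: the block matrix [[1, -Y], [X, 1]] factors both as a lower
  times an upper and as an upper times a lower block-triangular matrix.\<close>
lemma det_one_add_mult_commute:
  fixes X :: "'a :: idom mat"
  assumes X: "X \<in> carrier_mat n k" and Y: "Y \<in> carrier_mat k n"
  shows "det (1\<^sub>m n + X * Y) = det (1\<^sub>m k + Y * X)"
proof -
  have "four_block_mat (1\<^sub>m k) (0\<^sub>m k n) X (1\<^sub>m n + X * Y)
        * four_block_mat (1\<^sub>m k) (- Y) (0\<^sub>m n k) (1\<^sub>m n)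
      = four_block_mat (1\<^sub>m k + Y * X) (- Y) (0\<^sub>m n k) (1\<^sub>m n)
        * four_block_mat (1\<^sub>m k) (0\<^sub>m k n) X (1\<^sub>m n)"
    (is "?L * ?U = ?U' * ?L'")
  proof -
    have "?L * ?U = four_block_mat (1\<^sub>m k) (- Y) X (1\<^sub>m n)"
      by (subst mult_four_block_mat[of _ k k _ n _ n])
        (use X Y in \<open>auto intro!: eq_matI\<close>)
    moreover have "?U' * ?L' = four_block_mat (1\<^sub>m k) (- Y) X (1\<^sub>m n)"
      by (subst mult_four_block_mat[of _ k k _ n _ n])
        (use X Y in \<open>auto intro!: eq_matI\<close>)
    ultimately show ?thesis by simp
  qed
  moreover have "?L \<in> carrier_mat (k + n) (k + n)" "?U \<in> carrier_mat (k + n) (k + n)"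
    "?U' \<in> carrier_mat (k + n) (k + n)" "?L' \<in> carrier_mat (k + n) (k + n)"
    by (rule four_block_carrier_mat; use X Y in simp)+
  ultimately have "det ?L * det ?U = det ?U' * det ?L'"
    by (metis det_mult)
  moreover have "det ?L = det (1\<^sub>m n + X * Y)" "det ?L' = 1"
    using det_four_block_mat_upper_right_zero[of "1\<^sub>m k" k "0\<^sub>m k n" n X] X Y by simp_all
  moreover have "det ?U = 1" "det ?U' = det (1\<^sub>m k + Y * X)"
    using det_four_block_mat_lower_left_zero[of _ k "- Y" n "0\<^sub>m n k"] X Y by simp_all
  ultimately show ?thesis by simp
qed

lemma det_add_mult:
  fixes A :: "'a :: idom mat"
  assumes A: "A \<in> carrier_mat n n" and B: "B \<in> carrier_mat n n" and AB: "A * B = 1\<^sub>m n"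
    and X: "X \<in> carrier_mat n k" and Y: "Y \<in> carrier_mat k n"
  shows "det (A + X * Y) = det A * det (1\<^sub>m k + Y * B * X)"
proof -
  have "A * (B * X * Y) = A * B * (X * Y)"
    using assoc_mult_mat[OF A B mult_carrier_mat[OF X Y]] assoc_mult_mat[OF B X Y] by simp
  then have "A * (1\<^sub>m n + B * X * Y) = A + X * Y"
    using A B X Y AB mult_add_distrib_mat[OF A one_carrier_mat, of "B * X * Y"] by simp
  then have "det (A + X * Y) = det A * det (1\<^sub>m n + B * X * Y)"
    using A B X Y by (metis det_mult one_carrier_mat add_carrier_mat mult_carrier_mat)
  also have "\<dots> = det A * det (1\<^sub>m k + Y * (B * X))"
    by (simp only: det_one_add_mult_commute[OF mult_carrier_mat[OF B X] Y])
  finally show ?thesis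
    using assoc_mult_mat[OF Y B X] by simp
qed

lemma det_2x2:
  fixes M :: "'a :: comm_ring_1 mat"
  assumes "M \<in> carrier_mat 2 2"
  shows "det M = M $$ (0, 0) * M $$ (1, 1) - M $$ (0, 1) * M $$ (1, 0)"
  using laplace_expansion_row[OF assms, of 0] assms
  by (simp add: numeral_2_eq_2 lessThan_Suc cofactor_def det_single mat_delete_def)

lemma det_nonzero_imp_inverse:
  fixes A :: "'a :: field mat"
  assumes "A \<in> carrier_mat n n" "det A \<noteq> 0"
  obtains B where "B \<in> carrier_mat n n" "A * B = 1\<^sub>m n" "B * A = 1\<^sub>m n"
  using det_non_zero_imp_unit[OF assms, of "()"] that
  by (auto simp: Units_def ring_mat_simps)

lemma abs_det_le:
  fixes A :: "'a :: linordered_idom mat"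
  assumes A: "A \<in> carrier_mat n n" and bound: "\<And>i j. i < n \<Longrightarrow> j < n \<Longrightarrow> \<bar>A $$ (i, j)\<bar> \<le> c"
  shows "\<bar>det A\<bar> \<le> fact n * c ^ n"
proof -
  have "\<bar>det A\<bar> \<le> (\<Sum>p | p permutes {0..<n}. \<bar>signof p * (\<Prod>i = 0..<n. A $$ (i, p i))\<bar>)"
    unfolding det_def'[OF A] by (rule sum_abs)
  also have "\<dots> \<le> (\<Sum>p | p permutes {0..<n}. c ^ n)"
  proof (rule sum_mono)
    fix p assume "p \<in> {p. p permutes {0..<n}}"
    then have "p i < n" if "i < n" for i
      using permutes_in_image that by fastforce
    then have "(\<Prod>i = 0..<n. \<bar>A $$ (i, p i)\<bar>) \<le> (\<Prod>i = 0..<n. c)"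
      by (intro prod_mono) (simp add: bound)
    then show "\<bar>signof p * (\<Prod>i = 0..<n. A $$ (i, p i))\<bar> \<le> c ^ n"
      by (simp add: abs_mult sign_def abs_prod)
  qed
  also have "\<dots> = fact n * c ^ n"
    by (simp add: card_permutations)
  finally show ?thesis .
qed

section \<open>Gram matrices and leverages\<close>

lemma scalar_prod_sq_le:
  fixes u w :: "real vec"
  assumes "u \<in> carrier_vec n" "w \<in> carrier_vec n"
  shows "(u \<bullet> w)\<^sup>2 \<le> (u \<bullet> u) * (w \<bullet> w)"
  using assms Cauchy_Schwarz_ineq_sum[of "\<lambda>i. u $ i" "\<lambda>i. w $ i" "{0..<n}"]
  by (simp add: scalar_prod_def power2_eq_square)

lemma scalar_prod_gram:
  fixes A :: "'a :: comm_semiring_0 mat"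
  assumes A: "A \<in> carrier_mat m n" and x: "x \<in> carrier_vec n" and y: "y \<in> carrier_vec n"
  shows "x \<bullet> (A\<^sup>T * A *\<^sub>v y) = (A *\<^sub>v x) \<bullet> (A *\<^sub>v y)"
proof -
  have "x \<bullet> (A\<^sup>T * A *\<^sub>v y) = (A\<^sup>T *\<^sub>v (A *\<^sub>v y)) \<bullet> x"
    using A x y by (simp add: comm_scalar_prod[of x n])
  also have "\<dots> = (A *\<^sub>v y) \<bullet> (A *\<^sub>v x)"
    using A x y by (simp add: transpose_vec_mult_scalar)
  finally show ?thesis
    using A x y by (simp add: comm_scalar_prod[of _ m])
qed

definition replace_row :: "'a mat \<Rightarrow> nat \<Rightarrow> 'a vec \<Rightarrow> 'a mat" where
  "replace_row A k v = mat (dim_row A) (dim_col A) (\<lambda>(j, i). if j = k then v $ i else A $$ (j, i))"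

lemma gram_replace_row:
  fixes A :: "'a :: comm_ring_1 mat"
  assumes A: "A \<in> carrier_mat m n" and v: "v \<in> carrier_vec n" and k: "k < m"
  shows "(replace_row A k v)\<^sup>T * replace_row A k v
    = A\<^sup>T * A + mat_of_cols n [v, row A k] * mat_of_rows n [v, - row A k]"
proof (rule eq_matI)
  fix i l assume "i < dim_row (A\<^sup>T * A + mat_of_cols n [v, row A k] * mat_of_rows n [v, - row A k])"
    "l < dim_col (A\<^sup>T * A + mat_of_cols n [v, row A k] * mat_of_rows n [v, - row A k])"
  then have il: "i < n" "l < n" using A by auto
  let ?A' = "replace_row A k v"
  have "((?A')\<^sup>T * ?A') $$ (i, l) = v $ i * v $ l + (\<Sum>j\<in>{0..<m} - {k}. A $$ (j, i) * A $$ (j, l))"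
    using A k il by (simp add: scalar_prod_def sum.remove[of "{0..<m}" k] replace_row_def)
  moreover have "(A\<^sup>T * A) $$ (i, l) = A $$ (k, i) * A $$ (k, l) + (\<Sum>j\<in>{0..<m} - {k}. A $$ (j, i) * A $$ (j, l))"
    using A k il by (simp add: scalar_prod_def sum.remove[of "{0..<m}" k])
  moreover have "(mat_of_cols n [v, row A k] * mat_of_rows n [v, - row A k]) $$ (i, l)
      = v $ i * v $ l - A $$ (k, i) * A $$ (k, l)"
    using A v k il by (simp add: scalar_prod_def numeral_2_eq_2 mat_of_cols_index mat_of_rows_index)
  ultimately show "((?A')\<^sup>T * ?A') $$ (i, l)
      = (A\<^sup>T * A + mat_of_cols n [v, row A k] * mat_of_rows n [v, - row A k]) $$ (i, l)"
    using A il by simp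
qed (use A in \<open>auto simp: replace_row_def\<close>)

locale gram_inverse =
  fixes A H :: "real mat" and m n :: nat
  assumes A_carrier: "A \<in> carrier_mat m n" and H_carrier: "H \<in> carrier_mat n n"
    and gram_mult_H: "A\<^sup>T * A * H = 1\<^sub>m n" and H_mult_gram: "H * (A\<^sup>T * A) = 1\<^sub>m n"
begin

lemma gram_carrier: "A\<^sup>T * A \<in> carrier_mat n n"
  using A_carrier by simp

lemma det_gram_nonzero: "det (A\<^sup>T * A) \<noteq> 0"
  using det_mult[OF gram_carrier H_carrier] gram_mult_H by auto

lemma H_symmetric: "H\<^sup>T = H"
proof -
  have "(A\<^sup>T * A)\<^sup>T = A\<^sup>T * A"
    using A_carrier by (simp add: transpose_mult[of _ n m])
  then have "H\<^sup>T * (A\<^sup>T * A) = 1\<^sub>m n"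
    using transpose_mult[OF gram_carrier H_carrier] gram_mult_H by simp
  then have "H\<^sup>T * (A\<^sup>T * A) * H = H"
    using H_carrier by simp
  moreover have "H\<^sup>T * (A\<^sup>T * A) * H = H\<^sup>T"
    using H_carrier gram_carrier by (simp add: assoc_mult_mat[of _ n n _ n _ n] gram_mult_H)
  ultimately show ?thesis
    by simp
qed

lemma scalar_prod_H_commute:
  assumes "x \<in> carrier_vec n" "y \<in> carrier_vec n"
  shows "x \<bullet> (H *\<^sub>v y) = y \<bullet> (H *\<^sub>v x)"
  using transpose_vec_mult_scalar[OF H_carrier assms(2,1)] assms H_carrier
  by (simp add: H_symmetric comm_scalar_prod[of _ n])

lemma gram_mult_H_vec: "v \<in> carrier_vec n \<Longrightarrow> A\<^sup>T * A *\<^sub>v (H *\<^sub>v v) = v"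
  using gram_carrier H_carrier by (simp flip: assoc_mult_mat_vec add: gram_mult_H)

definition leverage :: "real vec \<Rightarrow> real" where
  "leverage v = v \<bullet> (H *\<^sub>v v)"

lemma scalar_prod_eq_mult_H:
  assumes a: "a \<in> carrier_vec n" and v: "v \<in> carrier_vec n"
  shows "a \<bullet> v = (A *\<^sub>v a) \<bullet> (A *\<^sub>v (H *\<^sub>v v))"
  using scalar_prod_gram[OF A_carrier a, of "H *\<^sub>v v"] gram_mult_H_vec[OF v] H_carrier v by simp

lemma leverage_eq_mult_H:
  assumes v: "v \<in> carrier_vec n"
  shows "leverage v = (A *\<^sub>v (H *\<^sub>v v)) \<bullet> (A *\<^sub>v (H *\<^sub>v v))"
proof -
  have "leverage v = (H *\<^sub>v v) \<bullet> v"
    using H_carrier v by (simp add: leverage_def comm_scalar_prod[of _ n])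
  then show ?thesis
    using scalar_prod_eq_mult_H[of "H *\<^sub>v v" v] H_carrier v by simp
qed

lemma scalar_prod_sq_le_leverage:
  assumes a: "a \<in> carrier_vec n" and v: "v \<in> carrier_vec n"
  shows "(a \<bullet> v)\<^sup>2 \<le> ((A *\<^sub>v a) \<bullet> (A *\<^sub>v a)) * leverage v"
  using scalar_prod_sq_le[of "A *\<^sub>v a" m "A *\<^sub>v (H *\<^sub>v v)"] A_carrier H_carrier a v
  by (simp add: scalar_prod_eq_mult_H leverage_eq_mult_H)

lemma sum_sq_row_scalar_prod_H:
  assumes v: "v \<in> carrier_vec n"
  shows "(\<Sum>k<m. (row A k \<bullet> (H *\<^sub>v v))\<^sup>2) = leverage v"
  using A_carrier H_carrier v
  by (simp add: leverage_eq_mult_H scalar_prod_def power2_eq_square atLeast0LessThan)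

lemma sum_leverage_rows: "(\<Sum>k<m. leverage (row A k)) = real n"
proof -
  have "(\<Sum>k<m. leverage (row A k)) = (\<Sum>k<m. \<Sum>i<n. \<Sum>l<n. H $$ (i, l) * (A $$ (k, l) * A $$ (k, i)))"
    using A_carrier H_carrier
    by (intro sum.cong) (auto simp: leverage_def scalar_prod_def sum_distrib_left atLeast0LessThan ac_simps)
  also have "\<dots> = (\<Sum>i<n. \<Sum>l<n. H $$ (i, l) * (A\<^sup>T * A) $$ (l, i))"
    using A_carrier
    by (simp add: sum.swap[of _ "{..<m}"] sum_distrib_left scalar_prod_def atLeast0LessThan)
  also have "\<dots> = (\<Sum>i<n. (H * (A\<^sup>T * A)) $$ (i, i))"
    using A_carrier H_carrier by (simp add: scalar_prod_def atLeast0LessThan)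
  finally show ?thesis
    by (simp add: H_mult_gram)
qed

lemma det_gram_replace_row:
  assumes v: "v \<in> carrier_vec n" and k: "k < m"
  shows "det ((replace_row A k v)\<^sup>T * replace_row A k v) = det (A\<^sup>T * A) *
    ((1 + leverage v) * (1 - leverage (row A k)) + (row A k \<bullet> (H *\<^sub>v v))\<^sup>2)"
proof -
  define w where "w = row A k"
  define X where "X = mat_of_cols n [v, w]"
  define Y where "Y = mat_of_rows n [v, - w]"
  have w: "w \<in> carrier_vec n"
    using A_carrier k by (simp add: w_def)
  have X: "X \<in> carrier_mat n 2" and Y: "Y \<in> carrier_mat 2 n"
    using mat_of_cols_carrier(1)[of n "[v, w]"] mat_of_rows_carrier(1)[of n "[v, - w]"]
    by (simp_all add: X_def Y_def numeral_2_eq_2)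
  define M where "M = Y * H * X"
  have M: "M \<in> carrier_mat 2 2"
    using X Y H_carrier by (simp add: M_def)
  have entry: "M $$ (s, t) = [v, - w] ! s \<bullet> (H *\<^sub>v [v, w] ! t)" if "s < 2" "t < 2" for s t
  proof -
    have "M $$ (s, t) = row Y s \<bullet> col (H * X) t"
      using X Y H_carrier that by (simp add: M_def assoc_mult_mat[OF Y H_carrier X])
    also have "\<dots> = [v, - w] ! s \<bullet> (H *\<^sub>v [v, w] ! t)"
      using X H_carrier v w that by (simp add: X_def Y_def nth_Cons' numeral_2_eq_2)
    finally show ?thesis .
  qed
  have "det ((replace_row A k v)\<^sup>T * replace_row A k v) = det (A\<^sup>T * A) * det (1\<^sub>m 2 + M)"
    using gram_replace_row[OF A_carrier v k] det_add_mult[OF gram_carrier H_carrier gram_mult_H X Y]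
    by (simp add: M_def X_def Y_def w_def)
  also have "det (1\<^sub>m 2 + M) = (1 + M $$ (0, 0)) * (1 + M $$ (1, 1)) - M $$ (0, 1) * M $$ (1, 0)"
    using M by (simp add: det_2x2)
  also have "\<dots> = (1 + leverage v) * (1 - leverage w) + (w \<bullet> (H *\<^sub>v v))\<^sup>2"
    using H_carrier v w
    by (simp add: entry leverage_def scalar_prod_H_commute[of v w] power2_eq_square algebra_simps)
  finally show ?thesis
    by (simp add: w_def)
qed

text \<open>The replacement ratios of \<open>det_gram_replace_row\<close> sum to (1 + q) (m - n) + q, where q is
  the leverage of v, because the leverages of the rows sum to n. For m = 2n and all ratios at
  most 1 + 1/(2n) this forces q \<le> 1.\<close>
lemma leverage_le_one_if_nearly_maximal:
  assumes m: "m = 2 * n" and v: "v \<in> carrier_vec n"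
    and nearly_maximal: "\<And>k. k < m \<Longrightarrow> \<bar>det ((replace_row A k v)\<^sup>T * replace_row A k v)\<bar>
      \<le> (1 + 1 / (2 * real n)) * \<bar>det (A\<^sup>T * A)\<bar>"
  shows "leverage v \<le> 1"
proof -
  define R where "R k = (1 + leverage v) * (1 - leverage (row A k)) + (row A k \<bullet> (H *\<^sub>v v))\<^sup>2" for k
  have "R k \<le> 1 + 1 / (2 * real n)" if "k < m" for k
  proof -
    have "\<bar>det (A\<^sup>T * A)\<bar> * \<bar>R k\<bar> \<le> \<bar>det (A\<^sup>T * A)\<bar> * (1 + 1 / (2 * real n))"
      using nearly_maximal[OF that] det_gram_replace_row[OF v that]
      by (simp add: R_def abs_mult mult.commute)
    then show ?thesis
      using det_gram_nonzero by simp
  qed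
  then have "(\<Sum>k<m. R k) \<le> (\<Sum>k<m. 1 + 1 / (2 * real n))"
    by (intro sum_mono) simp
  also have "\<dots> \<le> 2 * real n + 1"
    using m by (simp add: algebra_simps)
  finally have "(\<Sum>k<m. R k) \<le> 2 * real n + 1" .
  moreover have "(\<Sum>k<m. R k) = (1 + leverage v) * (real m - real n) + leverage v"
    using v by (simp add: R_def sum.distrib sum_subtractf sum_leverage_rows sum_sq_row_scalar_prod_H
        flip: sum_distrib_left)
  ultimately have "leverage v * (real n + 1) \<le> 1 * (real n + 1)"
    using m by (simp add: algebra_simps)
  then show ?thesis
    by (rule mult_right_le_imp_le) simp
qed

lemma scalar_prod_sq_le_if_nearly_maximal:
  assumes m: "m = 2 * n" and a: "a \<in> carrier_vec n" and v: "v \<in> carrier_vec n"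
    and nearly_maximal: "\<And>k. k < m \<Longrightarrow> \<bar>det ((replace_row A k v)\<^sup>T * replace_row A k v)\<bar>
      \<le> (1 + 1 / (2 * real n)) * \<bar>det (A\<^sup>T * A)\<bar>"
  shows "(a \<bullet> v)\<^sup>2 \<le> (A *\<^sub>v a) \<bullet> (A *\<^sub>v a)"
proof -
  have "0 \<le> (A *\<^sub>v a) \<bullet> (A *\<^sub>v a)"
    by (simp add: scalar_prod_def sum_nonneg)
  then have "((A *\<^sub>v a) \<bullet> (A *\<^sub>v a)) * leverage v \<le> (A *\<^sub>v a) \<bullet> (A *\<^sub>v a)"
    using leverage_le_one_if_nearly_maximal[OF m v nearly_maximal] by (simp add: mult_left_le)
  then show ?thesis
    using scalar_prod_sq_le_leverage[OF a v] by linarith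
qed

end

section \<open>Collocation matrices\<close>

lemma exists_nearly_maximal:
  fixes D :: "'a \<Rightarrow> real"
  assumes bdd: "bdd_above (D ` S)" and x0: "x0 \<in> S" "0 < D x0" and \<theta>: "1 < \<theta>"
  obtains x where "x \<in> S" "0 < D x" "\<forall>y\<in>S. D y \<le> \<theta> * D x"
proof -
  define s where "s = Sup (D ` S)"
  have le_s: "D y \<le> s" if "y \<in> S" for y
    unfolding s_def using bdd that by (simp add: cSup_upper)
  then have "0 < s"
    using x0 by fastforce
  then have "s / \<theta> < s"
    using \<theta> by (simp add: divide_less_eq)
  then obtain x where x: "x \<in> S" "s / \<theta> < D x"
    using less_cSup_iff[of "D ` S"] bdd x0 unfolding s_def by auto
  then have "s < \<theta> * D x"
    using \<theta> by (simp add: divide_less_eq mult.commute)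
  show ?thesis
  proof (rule that)
    have "0 < s / \<theta>"
      using \<open>0 < s\<close> \<theta> by simp
    then show "x \<in> S" "0 < D x"
      using x by simp_all
    show "\<forall>y\<in>S. D y \<le> \<theta> * D x"
      using le_s \<open>s < \<theta> * D x\<close> by force
  qed
qed

definition collocation_mat ::
    "(nat \<Rightarrow> 'a \<Rightarrow> real) \<Rightarrow> nat \<Rightarrow> (nat \<Rightarrow> 'a) \<Rightarrow> nat \<Rightarrow> real mat" where
  "collocation_mat \<phi> n \<xi> m = mat m n (\<lambda>(j, i). \<phi> i (\<xi> j))"

lemma collocation_mat_carrier [simp]: "collocation_mat \<phi> n \<xi> m \<in> carrier_mat m n"
  by (simp add: collocation_mat_def)

lemma collocation_mat_dims [simp]:
  "dim_row (collocation_mat \<phi> n \<xi> m) = m" "dim_col (collocation_mat \<phi> n \<xi> m) = n"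
  by (simp_all add: collocation_mat_def)

definition collocation_gram ::
    "(nat \<Rightarrow> 'a \<Rightarrow> real) \<Rightarrow> nat \<Rightarrow> (nat \<Rightarrow> 'a) \<Rightarrow> nat \<Rightarrow> real mat" where
  "collocation_gram \<phi> n \<xi> m = (collocation_mat \<phi> n \<xi> m)\<^sup>T * collocation_mat \<phi> n \<xi> m"

lemma collocation_gram_carrier [simp]: "collocation_gram \<phi> n \<xi> m \<in> carrier_mat n n"
  unfolding collocation_gram_def by (rule mult_carrier_mat[of _ n m]) simp_all

lemma collocation_mat_mult_vec:
  assumes "\<alpha> \<in> carrier_vec n" "j < m"
  shows "(collocation_mat \<phi> n \<xi> m *\<^sub>v \<alpha>) $ j = (\<Sum>i<n. \<alpha> $ i * \<phi> i (\<xi> j))"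
  using assms by (simp add: collocation_mat_def scalar_prod_def atLeast0LessThan mult.commute)

lemma replace_row_collocation_mat:
  assumes "k < m"
  shows "replace_row (collocation_mat \<phi> n \<xi> m) k (vec n (\<lambda>i. \<phi> i x)) = collocation_mat \<phi> n (\<xi>(k := x)) m"
  by (rule eq_matI) (auto simp: replace_row_def collocation_mat_def)

lemma sum_sq_collocation:
  assumes "\<alpha> \<in> carrier_vec n"
  shows "(collocation_mat \<phi> n \<xi> m *\<^sub>v \<alpha>) \<bullet> (collocation_mat \<phi> n \<xi> m *\<^sub>v \<alpha>)
    = (\<Sum>j<m. (\<Sum>i<n. \<alpha> $ i * \<phi> i (\<xi> j))\<^sup>2)"
  using assms
  by (simp add: scalar_prod_def collocation_mat_mult_vec power2_eq_square atLeast0LessThan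
      del: index_mult_mat_vec)

lemma collocation_sq_le_sum_sq:
  assumes nonsingular: "det (collocation_gram \<phi> n \<xi> (2 * n)) \<noteq> 0"
    and nearly_maximal: "\<And>k. k < 2 * n \<Longrightarrow> \<bar>det (collocation_gram \<phi> n (\<xi>(k := x)) (2 * n))\<bar>
      \<le> (1 + 1 / (2 * real n)) * \<bar>det (collocation_gram \<phi> n \<xi> (2 * n))\<bar>"
    and \<alpha>: "\<alpha> \<in> carrier_vec n"
  shows "(\<Sum>i<n. \<alpha> $ i * \<phi> i x)\<^sup>2 \<le> (\<Sum>j<2 * n. (\<Sum>i<n. \<alpha> $ i * \<phi> i (\<xi> j))\<^sup>2)"
proof -
  define A where "A = collocation_mat \<phi> n \<xi> (2 * n)"
  define v where "v = vec n (\<lambda>i. \<phi> i x)"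
  have "A\<^sup>T * A \<in> carrier_mat n n" "det (A\<^sup>T * A) \<noteq> 0"
    using nonsingular collocation_gram_carrier by (simp_all add: A_def collocation_gram_def)
  then obtain H where "H \<in> carrier_mat n n" "A\<^sup>T * A * H = 1\<^sub>m n" "H * (A\<^sup>T * A) = 1\<^sub>m n"
    by (rule det_nonzero_imp_inverse)
  then interpret gram_inverse A H "2 * n" n
    by unfold_locales (simp_all add: A_def)
  have "(\<alpha> \<bullet> v)\<^sup>2 \<le> (A *\<^sub>v \<alpha>) \<bullet> (A *\<^sub>v \<alpha>)"
    by (rule scalar_prod_sq_le_if_nearly_maximal)
      (use \<alpha> nearly_maximal in \<open>simp_all add: v_def A_def collocation_gram_def replace_row_collocation_mat\<close>)
  moreover have "\<alpha> \<bullet> v = (\<Sum>i<n. \<alpha> $ i * \<phi> i x)"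
    by (simp add: v_def scalar_prod_def atLeast0LessThan)
  ultimately show ?thesis
    using \<alpha> by (simp add: A_def sum_sq_collocation)
qed

lemma abs_collocation_gram_le:
  assumes bounded: "\<And>i x. i < n \<Longrightarrow> x \<in> \<Omega> \<Longrightarrow> \<bar>\<phi> i x\<bar> \<le> c" and \<xi>: "\<forall>j<m. \<xi> j \<in> \<Omega>"
    and "i < n" "l < n"
  shows "\<bar>collocation_gram \<phi> n \<xi> m $$ (i, l)\<bar> \<le> real m * c\<^sup>2"
proof -
  have "\<bar>\<phi> i (\<xi> j) * \<phi> l (\<xi> j)\<bar> \<le> c * c" if "j < m" for j
  proof -
    have "\<bar>\<phi> i (\<xi> j)\<bar> \<le> c" "\<bar>\<phi> l (\<xi> j)\<bar> \<le> c"
      using bounded \<xi> \<open>i < n\<close> \<open>l < n\<close> that by auto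
    moreover from this have "0 \<le> c"
      by (meson abs_ge_zero order_trans)
    ultimately show ?thesis
      unfolding abs_mult using mult_mono abs_ge_zero by blast
  qed
  then have "(\<Sum>j<m. \<bar>\<phi> i (\<xi> j) * \<phi> l (\<xi> j)\<bar>) \<le> (\<Sum>j<m. c * c)"
    by (intro sum_mono) simp
  then have "\<bar>\<Sum>j<m. \<phi> i (\<xi> j) * \<phi> l (\<xi> j)\<bar> \<le> (\<Sum>j<m. c * c)"
    using sum_abs[of "\<lambda>j. \<phi> i (\<xi> j) * \<phi> l (\<xi> j)" "{..<m}"] by linarith
  then have "\<bar>\<Sum>j<m. \<phi> i (\<xi> j) * \<phi> l (\<xi> j)\<bar> \<le> real m * c\<^sup>2"
    by (simp add: power2_eq_square)
  then show ?thesis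
    using \<open>i < n\<close> \<open>l < n\<close>
    by (simp add: collocation_gram_def collocation_mat_def scalar_prod_def atLeast0LessThan)
qed

text \<open>Without a continuity argument the supremum of the Gram determinant need not be attained;
  a maximiser up to a factor \<theta> > 1 is all the argument needs.\<close>
lemma exists_nearly_maximal_collocation:
  assumes bounded: "\<And>i x. i < n \<Longrightarrow> x \<in> \<Omega> \<Longrightarrow> \<bar>\<phi> i x\<bar> \<le> c"
    and \<xi>\<^sub>0: "\<forall>j<m. \<xi>\<^sub>0 j \<in> \<Omega>" "det (collocation_gram \<phi> n \<xi>\<^sub>0 m) \<noteq> 0" and \<theta>: "1 < \<theta>"
  obtains \<xi> where "\<forall>j<m. \<xi> j \<in> \<Omega>" "det (collocation_gram \<phi> n \<xi> m) \<noteq> 0"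
    "\<forall>k<m. \<forall>x\<in>\<Omega>.
      \<bar>det (collocation_gram \<phi> n (\<xi>(k := x)) m)\<bar> \<le> \<theta> * \<bar>det (collocation_gram \<phi> n \<xi> m)\<bar>"
proof -
  define S where "S = {\<xi>. \<forall>j<m. \<xi> j \<in> \<Omega>}"
  define D where "D \<xi> = \<bar>det (collocation_gram \<phi> n \<xi> m)\<bar>" for \<xi>
  have "D \<xi> \<le> fact n * (real m * c\<^sup>2) ^ n" if "\<xi> \<in> S" for \<xi>
    unfolding D_def using that
    by (intro abs_det_le[OF collocation_gram_carrier] abs_collocation_gram_le[OF bounded])
      (simp_all add: S_def)
  then have "bdd_above (D ` S)"
    by (intro bdd_aboveI) auto
  moreover have "\<xi>\<^sub>0 \<in> S" "0 < D \<xi>\<^sub>0"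
    using \<xi>\<^sub>0 by (simp_all add: S_def D_def)
  ultimately obtain \<xi> where \<xi>: "\<xi> \<in> S" "0 < D \<xi>" "\<forall>\<eta>\<in>S. D \<eta> \<le> \<theta> * D \<xi>"
    using exists_nearly_maximal[of D S \<xi>\<^sub>0 \<theta>] \<theta> by blast
  show ?thesis
  proof (rule that)
    show "\<forall>j<m. \<xi> j \<in> \<Omega>" "det (collocation_gram \<phi> n \<xi> m) \<noteq> 0"
      using \<xi>(1,2) by (simp_all add: S_def D_def)
    show "\<forall>k<m. \<forall>x\<in>\<Omega>.
      \<bar>det (collocation_gram \<phi> n (\<xi>(k := x)) m)\<bar> \<le> \<theta> * \<bar>det (collocation_gram \<phi> n \<xi> m)\<bar>"
      using \<xi>(1,3) by (simp add: S_def D_def)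
  qed
qed

lemma exists_nonsingular_collocation:
  assumes P: "finite P" "P \<subseteq> \<Omega>" "card P \<le> m" and "\<Omega> \<noteq> {}"
    and unisolvent: "\<forall>\<alpha>\<in>carrier_vec n. (\<forall>x\<in>P. (\<Sum>i<n. \<alpha> $ i * \<phi> i x) = 0) \<longrightarrow> \<alpha> = 0\<^sub>v n"
  obtains \<xi> where "\<forall>j<m. \<xi> j \<in> \<Omega>" "det (collocation_gram \<phi> n \<xi> m) \<noteq> 0"
proof -
  obtain z where z: "z \<in> \<Omega>"
    using \<open>\<Omega> \<noteq> {}\<close> by blast
  obtain e where e: "bij_betw e {..<card P} P"
    using ex_bij_betw_nat_finite[OF P(1)] by (auto simp: atLeast0LessThan)
  define \<xi> where "\<xi> j = (if j < card P then e j else z)" for j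
  have e_P: "e j \<in> P" if "j < card P" for j
    using bij_betwE[OF e] that by blast
  have \<xi>: "\<forall>j<m. \<xi> j \<in> \<Omega>"
    using e_P z P(2) by (auto simp: \<xi>_def)
  have "P = e ` {..<card P}"
    using e by (simp add: bij_betw_def)
  also have "\<dots> = \<xi> ` {..<card P}"
    by (simp add: \<xi>_def)
  also have "\<dots> \<subseteq> \<xi> ` {..<m}"
    using P(3) by (intro image_mono) auto
  finally have P_sampled: "P \<subseteq> \<xi> ` {..<m}" .
  have "det (collocation_gram \<phi> n \<xi> m) \<noteq> 0"
  proof
    define E where "E = collocation_mat \<phi> n \<xi> m"
    assume "det (collocation_gram \<phi> n \<xi> m) = 0"
    then obtain \<alpha> where \<alpha>: "\<alpha> \<in> carrier_vec n" "\<alpha> \<noteq> 0\<^sub>v n" "collocation_gram \<phi> n \<xi> m *\<^sub>v \<alpha> = 0\<^sub>v n"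
      using det_0_iff_vec_prod_zero_field[OF collocation_gram_carrier] by blast
    then have "(E *\<^sub>v \<alpha>) \<bullet> (E *\<^sub>v \<alpha>) = 0"
      using scalar_prod_gram[of E m n \<alpha> \<alpha>] by (simp add: E_def collocation_gram_def)
    then have "(\<Sum>i<n. \<alpha> $ i * \<phi> i (\<xi> j)) = 0" if "j < m" for j
      using that \<alpha>(1) sum_nonneg_eq_0_iff[of "{..<m}" "\<lambda>j. (\<Sum>i<n. \<alpha> $ i * \<phi> i (\<xi> j))\<^sup>2"]
      by (simp add: E_def sum_sq_collocation)
    then have "\<forall>x\<in>P. (\<Sum>i<n. \<alpha> $ i * \<phi> i x) = 0"
      using P_sampled by auto
    then show False
      using unisolvent \<alpha>(1,2) by blast
  qed
  with \<xi> show ?thesis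
    using that by blast
qed

section \<open>Unisolvent points\<close>

lemma sum_fun_apply: "(\<Sum>b\<in>S. g b) x = (\<Sum>b\<in>S. g b x)"
  by (induction S rule: infinite_finite_induct) auto

lemma module_fscale: "Modules.module (fscale :: real \<Rightarrow> ('a \<Rightarrow> real) \<Rightarrow> 'a \<Rightarrow> real)"
  by unfold_locales (auto simp: fscale_def algebra_simps)

lemma vector_space_fscale: "Vector_Spaces.vector_space (fscale :: real \<Rightarrow> ('a \<Rightarrow> real) \<Rightarrow> 'a \<Rightarrow> real)"
  using module_fscale unfolding vector_space_def Modules.module_def .

lemma triangular_family_independent:
  fixes g :: "nat \<Rightarrow> 'a \<Rightarrow> real"
  assumes diagonal: "\<And>j. j < k \<Longrightarrow> g j (x j) \<noteq> 0"
    and triangular: "\<And>i j. i < j \<Longrightarrow> j < k \<Longrightarrow> g j (x i) = 0"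
  shows "inj_on g {..<k}" "\<not> Modules.module.dependent fscale (g ` {..<k})"
proof -
  interpret Modules.module "fscale :: real \<Rightarrow> ('a \<Rightarrow> real) \<Rightarrow> 'a \<Rightarrow> real"
    by (rule module_fscale)
  show inj: "inj_on g {..<k}"
  proof (rule inj_onI)
    fix i j assume "i \<in> {..<k}" "j \<in> {..<k}" "g i = g j"
    then show "i = j"
      using diagonal triangular by (metis lessThan_iff linorder_neqE_nat)
  qed
  show "\<not> dependent (g ` {..<k})"
  proof
    assume "dependent (g ` {..<k})"
    then obtain u where u: "(\<Sum>j<k. fscale (u (g j)) (g j)) = 0" and "\<exists>j<k. u (g j) \<noteq> 0"
      using dependent_finite[of "g ` {..<k}"] sum.reindex[OF inj, of "\<lambda>v. fscale (u v) v" for u] by auto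
    have combination_at: "(\<Sum>j<k. u (g j) * g j (x i)) = 0" for i
      using fun_cong[OF u, of "x i"] by (simp add: sum_fun_apply fscale_def)
    have "u (g i) = 0" if "i < k" for i
      using that
    proof (induction i rule: less_induct)
      case (less i)
      have "(\<Sum>j\<in>{..<k} - {i}. u (g j) * g j (x i)) = 0"
        using less.IH triangular less.prems by (intro sum.neutral) (auto simp: linorder_neq_iff)
      then have "u (g i) * g i (x i) = 0"
        using combination_at[of i] less.prems by (simp add: sum.remove[of "{..<k}" i])
      then show ?case
        using diagonal less.prems by simp
    qed
    with \<open>\<exists>j<k. u (g j) \<noteq> 0\<close> show False
      by blast
  qed
qed

text \<open>Call (x j, g j) for j < k triangular if g j (x j) \<noteq> 0 and g j (x i) = 0 for i < j. The g j of
  such a system are independent, so k \<le> card B; the points of a longest system are unisolvent,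
  since a function of span B vanishing there but not at some y \<in> \<Omega> would extend it.\<close>
lemma exists_unisolvent_points:
  fixes B :: "('a \<Rightarrow> real) set"
  assumes B: "finite B"
  obtains P where "finite P" "P \<subseteq> \<Omega>" "card P \<le> card B"
    "\<forall>f\<in>Modules.module.span fscale B. (\<forall>x\<in>P. f x = 0) \<longrightarrow> (\<forall>x\<in>\<Omega>. f x = 0)"
proof -
  interpret Vector_Spaces.vector_space "fscale :: real \<Rightarrow> ('a \<Rightarrow> real) \<Rightarrow> 'a \<Rightarrow> real"
    by (rule vector_space_fscale)
  define triangular where "triangular k \<longleftrightarrow> (\<exists>x g. \<forall>j<k. g j \<in> span B \<and> x j \<in> \<Omega> \<and>
    g j (x j) \<noteq> 0 \<and> (\<forall>i<j. g j (x i) = 0))" for k :: nat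
  have bounded: "k \<le> card B" if tri: "triangular k" for k
  proof -
    obtain x g where xg: "\<And>j. j < k \<Longrightarrow> g j \<in> span B \<and> x j \<in> \<Omega> \<and> g j (x j) \<noteq> 0 \<and> (\<forall>i<j. g j (x i) = 0)"
      using tri unfolding triangular_def by blast
    then have "inj_on g {..<k}" "\<not> dependent (g ` {..<k})"
      by (intro triangular_family_independent; blast)+
    moreover have "g ` {..<k} \<subseteq> span B"
      using xg by blast
    ultimately show ?thesis
      using independent_span_bound[OF B] card_image by fastforce
  qed
  define k where "k = (GREATEST k. triangular k)"
  have "triangular 0"
    by (simp add: triangular_def)
  then have "triangular k" and maximal: "\<And>k'. triangular k' \<Longrightarrow> k' \<le> k"
    unfolding k_def using bounded by (blast intro: GreatestI_nat Greatest_le_nat)+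
  then obtain x g where xg: "\<And>j. j < k \<Longrightarrow> g j \<in> span B \<and> x j \<in> \<Omega> \<and> g j (x j) \<noteq> 0 \<and> (\<forall>i<j. g j (x i) = 0)"
    unfolding triangular_def by blast
  show ?thesis
  proof (rule that)
    show "finite (x ` {..<k})" "x ` {..<k} \<subseteq> \<Omega>"
      using xg by auto
    show "card (x ` {..<k}) \<le> card B"
      using card_image_le[of "{..<k}" x] bounded[OF \<open>triangular k\<close>] by simp
    show "\<forall>f\<in>span B. (\<forall>y\<in>x ` {..<k}. f y = 0) \<longrightarrow> (\<forall>y\<in>\<Omega>. f y = 0)"
    proof (intro ballI impI)
      fix f y assume f: "f \<in> span B" "\<forall>y\<in>x ` {..<k}. f y = 0" and "y \<in> \<Omega>"
      show "f y = 0"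
      proof (rule ccontr)
        assume "f y \<noteq> 0"
        then have "triangular (Suc k)"
          unfolding triangular_def using xg f \<open>y \<in> \<Omega>\<close>
          by (intro exI[of _ "x(k := y)"] exI[of _ "g(k := f)"]) (auto simp: less_Suc_eq)
        then show False
          using maximal by fastforce
      qed
    qed
  qed
qed

lemma span_enumerated_basis:
  fixes \<phi> :: "nat \<Rightarrow> 'a \<Rightarrow> real"
  assumes \<phi>: "bij_betw \<phi> {..<n} B" and B: "finite B" and f: "f \<in> Modules.module.span fscale B"
  obtains \<alpha> where "\<alpha> \<in> carrier_vec n" "f = (\<lambda>x. \<Sum>i<n. \<alpha> $ i * \<phi> i x)"
proof -
  interpret Modules.module "fscale :: real \<Rightarrow> ('a \<Rightarrow> real) \<Rightarrow> 'a \<Rightarrow> real"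
    by (rule module_fscale)
  obtain u where "f = (\<Sum>b\<in>B. fscale (u b) b)"
    using f span_finite[OF B] by auto
  also have "\<dots> = (\<Sum>i<n. fscale (u (\<phi> i)) (\<phi> i))"
    by (rule sum.reindex_bij_betw[OF \<phi>, symmetric])
  finally have f_eq: "f x = (\<Sum>i<n. u (\<phi> i) * \<phi> i x)" for x
    by (simp add: sum_fun_apply fscale_def)
  show ?thesis
  proof (rule that)
    show "vec n (\<lambda>i. u (\<phi> i)) \<in> carrier_vec n"
      by simp
    show "f = (\<lambda>x. \<Sum>i<n. vec n (\<lambda>i. u (\<phi> i)) $ i * \<phi> i x)"
      unfolding fun_eq_iff f_eq by (auto intro: sum.cong)
  qed
qed

lemma independent_enumerated_basis:
  fixes \<phi> :: "nat \<Rightarrow> 'a \<Rightarrow> real"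
  assumes \<phi>: "bij_betw \<phi> {..<n} B" and B: "finite B" "\<not> Modules.module.dependent fscale B"
    and \<alpha>: "\<alpha> \<in> carrier_vec n" and vanishing: "\<And>x. (\<Sum>i<n. \<alpha> $ i * \<phi> i x) = 0"
  shows "\<alpha> = 0\<^sub>v n"
proof -
  interpret Modules.module "fscale :: real \<Rightarrow> ('a \<Rightarrow> real) \<Rightarrow> 'a \<Rightarrow> real"
    by (rule module_fscale)
  define u where "u b = \<alpha> $ inv_into {..<n} \<phi> b" for b
  have u_\<phi>: "u (\<phi> i) = \<alpha> $ i" if "i < n" for i
    using \<phi> that by (simp add: u_def bij_betw_def)
  have "(\<Sum>b\<in>B. fscale (u b) b) = (\<Sum>i<n. fscale (u (\<phi> i)) (\<phi> i))"
    by (rule sum.reindex_bij_betw[OF \<phi>, symmetric])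
  also have "\<dots> = 0"
    by (simp add: fun_eq_iff sum_fun_apply fscale_def u_\<phi> vanishing)
  finally have "u b = 0" if "b \<in> B" for b
    using B that unfolding dependent_finite[OF B(1)] by blast
  then have "\<alpha> $ i = 0" if "i < n" for i
    using u_\<phi>[OF that] bij_betwE[OF \<phi>] that by fastforce
  then show ?thesis
    using \<alpha> by (intro eq_vecI) simp_all
qed

lemma combination_in_span:
  fixes \<phi> :: "nat \<Rightarrow> 'a \<Rightarrow> real"
  assumes "\<And>i. i < n \<Longrightarrow> \<phi> i \<in> B"
  shows "(\<lambda>x. \<Sum>i<n. c i * \<phi> i x) \<in> Modules.module.span fscale B"
proof -
  interpret Modules.module "fscale :: real \<Rightarrow> ('a \<Rightarrow> real) \<Rightarrow> 'a \<Rightarrow> real"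
    by (rule module_fscale)
  have "(\<Sum>i<n. fscale (c i) (\<phi> i)) \<in> span B"
    using assms by (intro span_sum span_scale span_base) simp
  moreover have "(\<Sum>i<n. fscale (c i) (\<phi> i)) = (\<lambda>x. \<Sum>i<n. c i * \<phi> i x)"
    by (simp add: fun_eq_iff sum_fun_apply fscale_def)
  ultimately show ?thesis
    by simp
qed

lemma exists_unisolvent_points_enumerated:
  fixes \<phi> :: "nat \<Rightarrow> 'a \<Rightarrow> real"
  assumes \<phi>: "bij_betw \<phi> {..<n} B" and B: "finite B" "\<not> Modules.module.dependent fscale B"
    and support: "\<And>f x. f \<in> Modules.module.span fscale B \<Longrightarrow> x \<notin> \<Omega> \<Longrightarrow> f x = 0"
  obtains P where "finite P" "P \<subseteq> \<Omega>" "card P \<le> n"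
    "\<forall>\<alpha>\<in>carrier_vec n. (\<forall>x\<in>P. (\<Sum>i<n. \<alpha> $ i * \<phi> i x) = 0) \<longrightarrow> \<alpha> = 0\<^sub>v n"
proof -
  obtain P where P: "finite P" "P \<subseteq> \<Omega>" "card P \<le> card B"
    and unisolvent: "\<forall>f\<in>Modules.module.span fscale B. (\<forall>x\<in>P. f x = 0) \<longrightarrow> (\<forall>x\<in>\<Omega>. f x = 0)"
    by (rule exists_unisolvent_points[OF B(1)])
  show ?thesis
  proof (rule that)
    show "finite P" "P \<subseteq> \<Omega>" "card P \<le> n"
      using P bij_betw_same_card[OF \<phi>] by simp_all
    show "\<forall>\<alpha>\<in>carrier_vec n. (\<forall>x\<in>P. (\<Sum>i<n. \<alpha> $ i * \<phi> i x) = 0) \<longrightarrow> \<alpha> = 0\<^sub>v n"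
    proof (intro ballI impI)
      fix \<alpha> assume \<alpha>: "\<alpha> \<in> carrier_vec n" and "\<forall>x\<in>P. (\<Sum>i<n. \<alpha> $ i * \<phi> i x) = 0"
      moreover have span: "(\<lambda>x. \<Sum>i<n. \<alpha> $ i * \<phi> i x) \<in> Modules.module.span fscale B"
        using bij_betwE[OF \<phi>] by (intro combination_in_span) simp
      ultimately have "(\<Sum>i<n. \<alpha> $ i * \<phi> i x) = 0" for x
        using unisolvent span support[OF span] by (cases "x \<in> \<Omega>") auto
      then show "\<alpha> = 0\<^sub>v n"
        by (rule independent_enumerated_basis[OF \<phi> B \<alpha>])
    qed
  qed
qed

section \<open>Sampling points\<close>

lemma abs_le_sqrt_mult_Max:
  fixes f :: "'a \<Rightarrow> real"
  assumes "(f x)\<^sup>2 \<le> (\<Sum>j<m. (f (\<xi> j))\<^sup>2)" "0 < m"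
  shows "\<bar>f x\<bar> \<le> sqrt (real m) * Max ((\<lambda>y. \<bar>f y\<bar>) ` \<xi> ` {..<m})"
proof -
  define M where "M = Max ((\<lambda>y. \<bar>f y\<bar>) ` \<xi> ` {..<m})"
  have M_bound: "\<bar>f (\<xi> j)\<bar> \<le> M" if "j < m" for j
    unfolding M_def using that by (intro Max_ge) auto
  have "(f (\<xi> j))\<^sup>2 \<le> M\<^sup>2" if "j < m" for j
    using power_mono[OF M_bound[OF that] abs_ge_zero, of 2] by simp
  then have "(\<Sum>j<m. (f (\<xi> j))\<^sup>2) \<le> (\<Sum>j<m. M\<^sup>2)"
    by (intro sum_mono) simp
  with assms(1) have "\<bar>f x\<bar>\<^sup>2 \<le> (sqrt (real m) * M)\<^sup>2"
    by (simp add: power_mult_distrib)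
  moreover have "0 \<le> sqrt (real m) * M"
    using M_bound[OF \<open>0 < m\<close>] by (simp add: order_trans[OF abs_ge_zero])
  ultimately have "\<bar>f x\<bar> \<le> sqrt (real m) * M"
    by (rule power2_le_imp_le)
  then show ?thesis
    by (simp only: M_def)
qed

lemma exists_nonsingular_collocation_basis:
  fixes \<phi> :: "nat \<Rightarrow> 'a \<Rightarrow> real"
  assumes N: "1 \<le> N" "N \<le> m" and \<phi>: "bij_betw \<phi> {..<N} B"
    and B: "finite B" "\<not> Modules.module.dependent fscale B"
    and support: "\<And>f x. f \<in> Modules.module.span fscale B \<Longrightarrow> x \<notin> \<Omega> \<Longrightarrow> f x = 0"
  obtains \<xi> where "\<forall>j<m. \<xi> j \<in> \<Omega>" "det (collocation_gram \<phi> N \<xi> m) \<noteq> 0"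
proof -
  obtain P where P: "finite P" "P \<subseteq> \<Omega>" "card P \<le> N"
    and unisolvent: "\<forall>\<alpha>\<in>carrier_vec N. (\<forall>x\<in>P. (\<Sum>i<N. \<alpha> $ i * \<phi> i x) = 0) \<longrightarrow> \<alpha> = 0\<^sub>v N"
    using support by (rule exists_unisolvent_points_enumerated[OF \<phi> B])
  have "P \<noteq> {}"
  proof
    assume "P = {}"
    then have "unit_vec N 0 = (0\<^sub>v N :: real vec)"
      using unisolvent by simp
    then have "unit_vec N 0 $ 0 = (0\<^sub>v N :: real vec) $ 0"
      by simp
    then show False
      using N by simp
  qed
  then have "card P \<le> m" "\<Omega> \<noteq> {}"
    using P(2,3) N by auto
  then show ?thesis
    using that by (rule exists_nonsingular_collocation[OF P(1,2) _ _ unisolvent])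
qed

lemma exists_points_sq_le_sum_sq:
  fixes \<Omega> :: "'a :: topological_space set" and \<phi> :: "nat \<Rightarrow> 'a \<Rightarrow> real"
  assumes \<Omega>: "compact \<Omega>" and N: "1 \<le> N" and \<phi>: "bij_betw \<phi> {..<N} B"
    and B: "finite B" "\<not> Modules.module.dependent fscale B" "Modules.module.span fscale B \<subseteq> Cfun \<Omega>"
  obtains \<xi> where "\<forall>j<2 * N. \<xi> j \<in> \<Omega>"
    "\<forall>f\<in>Modules.module.span fscale B. \<forall>x\<in>\<Omega>. (f x)\<^sup>2 \<le> (\<Sum>j<2 * N. (f (\<xi> j))\<^sup>2)"
proof -
  have \<phi>_span: "\<phi> i \<in> Modules.module.span fscale B" if "i < N" for i
    using bij_betwE[OF \<phi>] that Modules.module.span_base[OF module_fscale] by blast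
  have "f x = 0" if "f \<in> Modules.module.span fscale B" "x \<notin> \<Omega>" for f x
    using that B(3) by (auto simp: Cfun_def)
  moreover have "N \<le> 2 * N"
    by simp
  ultimately obtain \<xi>\<^sub>0 where \<xi>\<^sub>0: "\<forall>j<2 * N. \<xi>\<^sub>0 j \<in> \<Omega>" "det (collocation_gram \<phi> N \<xi>\<^sub>0 (2 * N)) \<noteq> 0"
    using exists_nonsingular_collocation_basis[OF N _ \<phi> B(1,2)] by blast
  have "compact (\<phi> i ` \<Omega>)" if "i < N" for i
    using \<phi>_span[OF that] B(3) \<Omega> by (intro compact_continuous_image) (auto simp: Cfun_def)
  then have "bounded (\<Union>i<N. \<phi> i ` \<Omega>)"
    by (intro compact_imp_bounded compact_UN) auto
  then obtain c where c: "\<And>i x. i < N \<Longrightarrow> x \<in> \<Omega> \<Longrightarrow> \<bar>\<phi> i x\<bar> \<le> c"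
    unfolding bounded_real by blast
  have \<theta>: "1 < 1 + 1 / (2 * real N)"
    using N by simp
  obtain \<xi> where \<xi>: "\<forall>j<2 * N. \<xi> j \<in> \<Omega>" "det (collocation_gram \<phi> N \<xi> (2 * N)) \<noteq> 0"
    "\<forall>k<2 * N. \<forall>x\<in>\<Omega>. \<bar>det (collocation_gram \<phi> N (\<xi>(k := x)) (2 * N))\<bar>
      \<le> (1 + 1 / (2 * real N)) * \<bar>det (collocation_gram \<phi> N \<xi> (2 * N))\<bar>"
    by (rule exists_nearly_maximal_collocation[OF c \<xi>\<^sub>0 \<theta>])
  show ?thesis
  proof (rule that)
    show "\<forall>j<2 * N. \<xi> j \<in> \<Omega>"
      by (fact \<xi>(1))
    show "\<forall>f\<in>Modules.module.span fscale B. \<forall>x\<in>\<Omega>. (f x)\<^sup>2 \<le> (\<Sum>j<2 * N. (f (\<xi> j))\<^sup>2)"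
    proof (intro ballI)
      fix f x assume "f \<in> Modules.module.span fscale B" "x \<in> \<Omega>"
      then obtain \<alpha> where \<alpha>: "\<alpha> \<in> carrier_vec N" "f = (\<lambda>x. \<Sum>i<N. \<alpha> $ i * \<phi> i x)"
        by (auto elim: span_enumerated_basis[OF \<phi> B(1)])
      show "(f x)\<^sup>2 \<le> (\<Sum>j<2 * N. (f (\<xi> j))\<^sup>2)"
        unfolding \<alpha>(2) using \<xi>(2,3) \<open>x \<in> \<Omega>\<close> by (intro collocation_sq_le_sum_sq \<alpha>(1)) auto
    qed
  qed
qed

lemma exists_sampling_points:
  fixes \<Omega> :: "'a :: topological_space set"
  assumes "compact \<Omega>" "1 \<le> N" "dim_subspace_C \<Omega> X N"
  shows "\<exists>P. finite P \<and> P \<noteq> {} \<and> P \<subseteq> \<Omega> \<and> card P \<le> 2 * N \<and>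
    (\<forall>f\<in>X. \<forall>x\<in>\<Omega>. \<bar>f x\<bar> \<le> sqrt (real (2 * N)) * Max ((\<lambda>\<xi>. \<bar>f \<xi>\<bar>) ` P))"
proof -
  obtain B where X: "X \<subseteq> Cfun \<Omega>" "Modules.module.span fscale B = X"
    and B: "finite B" "\<not> Modules.module.dependent fscale B" "card B = N"
    using assms(3) unfolding dim_subspace_C_def by blast
  obtain \<phi> where \<phi>: "bij_betw \<phi> {..<N} B"
    using ex_bij_betw_nat_finite[OF B(1)] B(3) by (auto simp: atLeast0LessThan)
  obtain \<xi> where \<xi>: "\<forall>j<2 * N. \<xi> j \<in> \<Omega>" "\<forall>f\<in>X. \<forall>x\<in>\<Omega>. (f x)\<^sup>2 \<le> (\<Sum>j<2 * N. (f (\<xi> j))\<^sup>2)"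
    using exists_points_sq_le_sum_sq[OF assms(1,2) \<phi> B(1,2)] X by blast
  have "\<bar>f x\<bar> \<le> sqrt (real (2 * N)) * Max ((\<lambda>y. \<bar>f y\<bar>) ` \<xi> ` {..<2 * N})"
    if "f \<in> X" "x \<in> \<Omega>" for f x
    using \<xi>(2) that assms(2) by (intro abs_le_sqrt_mult_Max) auto
  moreover have "finite (\<xi> ` {..<2 * N})" "\<xi> ` {..<2 * N} \<noteq> {}" "\<xi> ` {..<2 * N} \<subseteq> \<Omega>"
    "card (\<xi> ` {..<2 * N}) \<le> 2 * N"
    using \<xi>(1) assms(2) card_image_le[of "{..<2 * N}" \<xi>] by (auto simp: lessThan_empty_iff)
  ultimately show ?thesis
    by blast
qed

theorem corollary2p1:
  shows "\<exists>C1 C2::real. C1 > 0 \<and> C2 > 0 \<and>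
    (\<forall>(d::nat) (\<Omega>::(nat \<Rightarrow> real) set) (N::nat) (X::((nat \<Rightarrow> real) \<Rightarrow> real) set).
       \<Omega> \<subseteq> Rd d \<and> compact \<Omega> \<and> N \<ge> 1 \<and> dim_subspace_C \<Omega> X N \<longrightarrow>
       (\<exists>P. finite P \<and> P \<noteq> {} \<and> P \<subseteq> \<Omega> \<and> real (card P) \<le> C1 * real N \<and>
          (\<forall>f\<in>X. \<forall>x\<in>\<Omega>. \<bar>f x\<bar> \<le> C2 * sqrt (real N) * Max ((\<lambda>\<xi>. \<bar>f \<xi>\<bar>) ` P))))"
proof (rule exI[of _ 2], rule exI[of _ "sqrt 2"], intro conjI allI impI)
  fix d N :: nat and \<Omega> :: "(nat \<Rightarrow> real) set" and X :: "((nat \<Rightarrow> real) \<Rightarrow> real) set"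
  assume "\<Omega> \<subseteq> Rd d \<and> compact \<Omega> \<and> N \<ge> 1 \<and> dim_subspace_C \<Omega> X N"
  then have "\<exists>P. finite P \<and> P \<noteq> {} \<and> P \<subseteq> \<Omega> \<and> card P \<le> 2 * N \<and>
      (\<forall>f\<in>X. \<forall>x\<in>\<Omega>. \<bar>f x\<bar> \<le> sqrt (real (2 * N)) * Max ((\<lambda>\<xi>. \<bar>f \<xi>\<bar>) ` P))"
    by (intro exists_sampling_points) simp_all
  then obtain P where "finite P" "P \<noteq> {}" "P \<subseteq> \<Omega>" "card P \<le> 2 * N"
    "\<forall>f\<in>X. \<forall>x\<in>\<Omega>. \<bar>f x\<bar> \<le> sqrt (real (2 * N)) * Max ((\<lambda>\<xi>. \<bar>f \<xi>\<bar>) ` P)"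
    by blast
  then show "\<exists>P. finite P \<and> P \<noteq> {} \<and> P \<subseteq> \<Omega> \<and> real (card P) \<le> 2 * real N \<and>
      (\<forall>f\<in>X. \<forall>x\<in>\<Omega>. \<bar>f x\<bar> \<le> sqrt 2 * sqrt (real N) * Max ((\<lambda>\<xi>. \<bar>f \<xi>\<bar>) ` P))"
    by (intro exI[of _ P]) (simp add: real_sqrt_mult)
qed simp_all

end
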